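(* Let $k\ge2$, $p\in[0,1]$, and consider the random complex $Y^k(n,p)$. For every $(k-2)$-face $H\in\binom{[n]}{k-1}$, the random graph $\mathrm{lk}(H,Y^k(n,p))$ (on vertex set $[n]\setminus H$) has the distribution of the binomial random graph $G(n-k+1,p/2)$.
   Context: $Y^k(n,p)$ is the random $k$-dimensional complex on vertex set $[n]$ with complete $(k-1)$-skeleton (all subsets of size at most $k$ are faces) constructed as follows: choose $a:\binom{[n]}{k}\to\mathbb Z_2$ with the values $a(F)$ independent and uniform; call $H\in\binom{[n]}{k+1}$ good if $H$ contains an even number of $k$-subsets $F$ with $a(F)=1$; each good $H$ is added as a $k$-face independently with probability $p$. The link $\mathrm{lk}(H,Y)$ of $H\in\binom{[n]}{k-1}$ is the graph on $[n]\setminus H$ with edges $e$ such that $H\cup e$ is a $k$-face. $G(m,q)$ is the random graph on $m$ vertices with each edge present independently with probability $q$. *)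

theory Defs
  imports "HOL-Probability.Probability"
begin

definition subsets_of_size :: "nat set \<Rightarrow> nat \<Rightarrow> nat set set" where
  "subsets_of_size V j = {S. S \<subseteq> V \<and> card S = j}"

text \<open>A (k+1)-set H is good for a labelling a (a F = True meaning a(F)=1)
  if it contains an even number of k-subsets F with a F = 1.\<close>
definition good :: "nat \<Rightarrow> (nat set \<Rightarrow> bool) \<Rightarrow> nat set \<Rightarrow> bool" where
  "good k a H \<longleftrightarrow> even (card {F. F \<subseteq> H \<and> card F = k \<and> a F})"

text \<open>Distribution of the set of k-faces of Y^k(n,p) on vertex set [n] = {1..n}
  (the (k-1)-skeleton is complete and deterministic).\<close>
definition Y_faces :: "nat \<Rightarrow> nat \<Rightarrow> real \<Rightarrow> nat set set pmf" where
  "Y_faces n k p =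
     do {
       a \<leftarrow> Pi_pmf (subsets_of_size {1..n} k) False (\<lambda>_. pmf_of_set (UNIV :: bool set));
       c \<leftarrow> Pi_pmf (subsets_of_size {1..n} (k+1)) False (\<lambda>_. bernoulli_pmf p);
       return_pmf {H \<in> subsets_of_size {1..n} (k+1). good k a H \<and> c H}
     }"

definition link :: "nat \<Rightarrow> nat set \<Rightarrow> nat set set \<Rightarrow> nat set set" where
  "link n H faces = {e \<in> subsets_of_size ({1..n} - H) 2. H \<union> e \<in> faces}"

definition G_rand :: "nat set \<Rightarrow> real \<Rightarrow> nat set set pmf" where
  "G_rand V q = map_pmf (\<lambda>c. {e \<in> subsets_of_size V 2. c e})
                   (Pi_pmf (subsets_of_size V 2) False (\<lambda>_. bernoulli_pmf q))"

end

theory Submission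
  imports Defs
begin

text \<open>Fix h0 \<in> H. For an edge e of the link, the face H \<union> e is good iff the label of
  H \<union> e - {h0} differs from the parity of the labels of the other k-subsets of H \<union> e. Those
  other subsets all contain h0, so none of them is of the form H \<union> e' - {h0}. The labels of
  the sets H \<union> e - {h0} are independent fair coins, so flipping each by a bit that depends
  only on the remaining labels leaves them independent fair coins: the goodness indicators of
  the faces H \<union> e are independent fair coins, independent of the coins c(H \<union> e), and an edge
  is present iff both succeed, which happens independently with probability p/2.\<close>

abbreviation coin :: "bool pmf" where
  "coin \<equiv> pmf_of_set UNIV"

lemma bind_bernoulli_pmf_if:
  assumes "0 \<le> q" "q \<le> 1" "0 \<le> p" "p \<le> 1"
  shows "bind_pmf (bernoulli_pmf q) (\<lambda>b. if b then bernoulli_pmf p else return_pmf False)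
           = bernoulli_pmf (q * p)"
proof (rule pmf_eqI)
  fix x :: bool
  show "pmf (bind_pmf (bernoulli_pmf q) (\<lambda>b. if b then bernoulli_pmf p else return_pmf False)) x
        = pmf (bernoulli_pmf (q * p)) x"
    using assms by (cases x) (simp_all add: pmf_bind mult_le_one algebra_simps)
qed

lemma map_pmf_coin_xor: "map_pmf (\<lambda>y. y \<noteq> c) coin = coin"
proof -
  have "inj (\<lambda>y. y \<noteq> c)" "range (\<lambda>y. y \<noteq> c) = UNIV"
    by (auto simp: inj_def image_def intro: exI[of _ "_ \<noteq> c"])
  then show ?thesis
    by (simp add: map_pmf_of_set_inj)
qed

lemma Pi_pmf_coin_xor:
  assumes "finite E"
  shows "map_pmf (\<lambda>h e. if e \<in> E then h e \<noteq> b e else False) (Pi_pmf E False (\<lambda>_. coin))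
           = Pi_pmf E False (\<lambda>_. coin)"
proof -
  have "Pi_pmf E False (\<lambda>_. coin) = Pi_pmf E False (\<lambda>e. bind_pmf coin (\<lambda>y. return_pmf (y \<noteq> b e)))"
    by (intro Pi_pmf_cong refl) (metis map_pmf_coin_xor map_pmf_def)
  also have "\<dots> = bind_pmf (Pi_pmf E False (\<lambda>_. coin))
                    (\<lambda>h. return_pmf (\<lambda>e. if e \<in> E then h e \<noteq> b e else False))"
    using assms by (subst Pi_pmf_bind[where d'=False]) simp_all
  finally show ?thesis by (simp add: map_pmf_def)
qed

lemma Pi_pmf_bernoulli_thinning:
  assumes "finite E" "0 \<le> q" "q \<le> 1" "0 \<le> p" "p \<le> 1"
  shows "bind_pmf (Pi_pmf E False (\<lambda>_. bernoulli_pmf q))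
           (\<lambda>g. map_pmf (\<lambda>c. {e \<in> E. g e \<and> c e}) (Pi_pmf E False (\<lambda>_. bernoulli_pmf p)))
       = map_pmf (\<lambda>c. {e \<in> E. c e}) (Pi_pmf E False (\<lambda>_. bernoulli_pmf (q * p)))"
proof -
  have "Pi_pmf E False (\<lambda>_. bernoulli_pmf (q * p))
      = Pi_pmf E False (\<lambda>_. bind_pmf (bernoulli_pmf q) (\<lambda>b. if b then bernoulli_pmf p else return_pmf False))"
    using assms by (simp add: bind_bernoulli_pmf_if)
  also have "\<dots> = bind_pmf (Pi_pmf E False (\<lambda>_. bernoulli_pmf q))
                    (\<lambda>g. Pi_pmf {e \<in> E. g e} False (\<lambda>_. bernoulli_pmf p))"
    using assms by (simp add: Pi_pmf_bind[where d'=False] Pi_pmf_if_set)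
  also have "\<dots> = bind_pmf (Pi_pmf E False (\<lambda>_. bernoulli_pmf q))
                    (\<lambda>g. map_pmf (\<lambda>c e. if e \<in> {e \<in> E. g e} then c e else False)
                           (Pi_pmf E False (\<lambda>_. bernoulli_pmf p)))"
    using assms by (subst Pi_pmf_subset[where A=E]) auto
  finally have thinned: "Pi_pmf E False (\<lambda>_. bernoulli_pmf (q * p)) = \<dots>" .
  show ?thesis
    unfolding thinned map_bind_pmf pmf.map_comp o_def
    by (intro bind_pmf_cong map_pmf_cong refl) auto
qed

lemma Pi_pmf_reindex:
  assumes "finite S" "inj_on q E" "q ` E \<subseteq> S" "q ` E \<noteq> UNIV"
  shows "map_pmf (\<lambda>c e. if e \<in> E then c (q e) else d) (Pi_pmf S d (\<lambda>_. P)) = Pi_pmf E d (\<lambda>_. P)"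
proof -
  \<comment> \<open>The point z outside the image extends q to an index map that is bijective on E only.\<close>
  obtain z where z: "z \<notin> q ` E" using assms(4) by blast
  define h where "h e = (if e \<in> E then q e else z)" for e
  have "bij_betw h E (q ` E)"
    using assms(2) by (auto simp: bij_betw_def inj_on_def h_def)
  moreover have "finite E"
    using assms(1-3) finite_imageD finite_subset by blast
  ultimately have "Pi_pmf E d (\<lambda>_. P) = map_pmf (\<lambda>g. g \<circ> h) (Pi_pmf (q ` E) d (\<lambda>_. P))"
    using z by (intro Pi_pmf_bij_betw) (auto simp: h_def)
  also have "Pi_pmf (q ` E) d (\<lambda>_. P)
           = map_pmf (\<lambda>f x. if x \<in> q ` E then f x else d) (Pi_pmf S d (\<lambda>_. P))"
    using assms(1,3) by (rule Pi_pmf_subset)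
  finally show ?thesis
    using z by (auto simp: map_pmf_comp h_def intro!: map_pmf_cong ext)
qed

lemma Pi_pmf_coin_reindex_xor:
  assumes "finite S" "inj_on q E" "q ` E \<subseteq> S" "q ` E \<noteq> UNIV"
    and \<beta>_local: "\<And>a a' e. e \<in> E \<Longrightarrow> (\<And>x. x \<notin> q ` E \<Longrightarrow> a x = a' x) \<Longrightarrow> \<beta> a e = \<beta> a' e"
  shows "map_pmf (\<lambda>a e. if e \<in> E then a (q e) \<noteq> \<beta> a e else False) (Pi_pmf S False (\<lambda>_. coin))
           = Pi_pmf E False (\<lambda>_. coin)"
proof -
  define Q where "Q = q ` E"
  define merge where "merge f g = (\<lambda>x. if x \<in> Q then f x else g x)" for f g :: "'a \<Rightarrow> bool"
  have fin: "finite Q" "finite (S - Q)" "finite E"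
    using assms(1-3) finite_imageD finite_subset unfolding Q_def by blast+
  have "Pi_pmf S False (\<lambda>_. coin) = Pi_pmf (Q \<union> (S - Q)) False (\<lambda>_. coin)"
    using assms(3) unfolding Q_def by (simp add: Un_absorb1)
  also have "\<dots> = bind_pmf (Pi_pmf Q False (\<lambda>_. coin)) (\<lambda>f. bind_pmf (Pi_pmf (S - Q) False (\<lambda>_. coin))
                    (\<lambda>g. return_pmf (merge f g)))"
    using fin by (subst Pi_pmf_union) (auto simp: pair_pmf_def map_bind_pmf merge_def case_prod_unfold)
  also have "\<dots> = bind_pmf (Pi_pmf (S - Q) False (\<lambda>_. coin)) (\<lambda>g. map_pmf (\<lambda>f. merge f g)
                    (Pi_pmf Q False (\<lambda>_. coin)))"
    by (subst bind_commute_pmf) (simp add: map_pmf_def)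
  finally have split: "Pi_pmf S False (\<lambda>_. coin) = \<dots>" .
  \<comment> \<open>Given the coins g outside q ` E, each selected coin is flipped by the fixed bit \<beta> g e.\<close>
  have "\<beta> (merge f g) e = \<beta> g e" if "e \<in> E" for f g e
    using that by (rule \<beta>_local) (simp add: merge_def Q_def)
  moreover have "merge f g (q e) = f (q e)" if "e \<in> E" for f g e
    using that by (simp add: merge_def Q_def)
  ultimately have merged: "(\<lambda>e. if e \<in> E then merge f g (q e) \<noteq> \<beta> (merge f g) e else False)
      = (\<lambda>e. if e \<in> E then f (q e) \<noteq> \<beta> g e else False)" for f g
    by (intro ext) (simp cong: if_cong)
  have "map_pmf (\<lambda>f e. if e \<in> E then f (q e) \<noteq> \<beta> g e else False) (Pi_pmf Q False (\<lambda>_. coin))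
      = map_pmf (\<lambda>h e. if e \<in> E then h e \<noteq> \<beta> g e else False)
          (map_pmf (\<lambda>f e. if e \<in> E then f (q e) else False) (Pi_pmf Q False (\<lambda>_. coin)))" for g
    by (simp add: map_pmf_comp)
  also have "\<dots> g = Pi_pmf E False (\<lambda>_. coin)" for g
    using fin assms(2,4) unfolding Q_def by (simp add: Pi_pmf_reindex Pi_pmf_coin_xor)
  finally show ?thesis
    unfolding split map_bind_pmf map_pmf_comp merged by simp
qed

lemma even_card_filter_pick:
  assumes "finite A" "x \<in> A"
  shows "even (card {y \<in> A. P y}) \<longleftrightarrow> (P x \<noteq> even (card {y \<in> A - {x}. P y}))"
proof -
  have "{y \<in> A. P y} = (if P x then insert x {y \<in> A - {x}. P y} else {y \<in> A - {x}. P y})"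
    using assms(2) by auto
  then show ?thesis
    using assms(1) by simp
qed

lemma mem_if_card_eq_card_Diff_singleton:
  assumes "finite X" "F \<subseteq> X" "card F = card (X - {x})" "F \<noteq> X - {x}"
  shows "x \<in> F"
proof (rule ccontr)
  assume "x \<notin> F"
  then have "F \<subseteq> X - {x}"
    using assms(2) by blast
  then have "F = X - {x}"
    using assms(1,3) by (intro card_subset_eq) auto
  with assms(4) show False ..
qed

lemma finite_subsets_of_size: "finite V \<Longrightarrow> finite (subsets_of_size V j)"
  unfolding subsets_of_size_def by (rule finite_subset[of _ "Pow V"]) auto

lemma subsets_of_size_DiffD:
  assumes "e \<in> subsets_of_size (V - H) j" "j > 0"
  shows "e \<subseteq> V" "e \<inter> H = {}" "card e = j" "finite e"
  using assms unfolding subsets_of_size_def by (auto intro: card_ge_0_finite)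

lemma Un_mem_subsets_of_size:
  assumes "finite H" "H \<subseteq> V" "e \<in> subsets_of_size (V - H) j" "j > 0"
  shows "H \<union> e \<in> subsets_of_size V (card H + j)"
proof -
  note e = subsets_of_size_DiffD[OF assms(3,4)]
  have "card (H \<union> e) = card H + j"
    using assms(1) e by (subst card_Un_disjoint) auto
  then show ?thesis
    using assms(2) e(1) by (simp add: subsets_of_size_def)
qed

lemma inj_on_Un_disjoint: "inj_on (\<lambda>e. X \<union> e) {e. e \<inter> X = {}}"
proof (rule inj_onI)
  fix e e' assume "e \<in> {e. e \<inter> X = {}}" "e' \<in> {e. e \<inter> X = {}}" "X \<union> e = X \<union> e'"
  then show "e = e'" by blast
qed

lemma good_iff_parity_of_others:
  assumes "finite X" "x \<in> X" "card X = k + 1"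
  shows "good k a X \<longleftrightarrow> (a (X - {x}) \<noteq> even (card {F \<in> subsets_of_size X k - {X - {x}}. a F}))"
proof -
  have "good k a X = even (card {F \<in> subsets_of_size X k. a F})"
    unfolding good_def subsets_of_size_def by (rule arg_cong[where f="\<lambda>S. even (card S)"]) blast
  also have "\<dots> = (a (X - {x}) \<noteq> even (card {F \<in> subsets_of_size X k - {X - {x}}. a F}))"
    using assms by (intro even_card_filter_pick finite_subsets_of_size) (auto simp: subsets_of_size_def)
  finally show ?thesis .
qed

lemma Pi_pmf_good_link_labels:
  assumes "finite V" "H \<subseteq> V" "card H = k - 1" "k \<ge> 2"
  defines "E \<equiv> subsets_of_size (V - H) 2"
  shows "map_pmf (\<lambda>a e. if e \<in> E then good k a (H \<union> e) else False)
           (Pi_pmf (subsets_of_size V k) False (\<lambda>_. coin)) = Pi_pmf E False (\<lambda>_. coin)"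
proof -
  have "finite H"
    using assms(1,2) finite_subset by blast
  obtain h0 where h0: "h0 \<in> H"
    using assms(3,4) by fastforce
  define q where "q e = H \<union> e - {h0}" for e
  define \<beta> where "\<beta> a e = even (card {F \<in> subsets_of_size (H \<union> e) k - {q e}. a F})"
    for a :: "nat set \<Rightarrow> bool" and e
  note edge = subsets_of_size_DiffD[of _ V H 2, folded E_def, simplified]
  have face: "H \<union> e \<subseteq> V" "card (H \<union> e) = k + 1" "finite (H \<union> e)" if "e \<in> E" for e
    using Un_mem_subsets_of_size[OF \<open>finite H\<close> assms(2) that[unfolded E_def] pos2] assms(3,4)
      \<open>finite H\<close> edge(4)[OF that] by (auto simp: subsets_of_size_def)
  have card_q: "card (q e) = k" if "e \<in> E" for e
    using face(2,3)[OF that] h0 by (simp add: q_def)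
  have "e = q e - H" if "e \<in> E" for e
    using edge(2)[OF that] h0 unfolding q_def by blast
  then have inj_q: "inj_on q E"
    by (metis inj_onI)
  have range_q: "q ` E \<subseteq> subsets_of_size V k"
    using card_q face(1) by (auto simp: subsets_of_size_def q_def)
  have "{} \<notin> q ` E"
    using card_q assms(4) by force
  then have proper_q: "q ` E \<noteq> UNIV"
    by (rule contrapos_nn) simp
  have \<beta>_local: "\<beta> a e = \<beta> a' e" if "e \<in> E" "\<And>x. x \<notin> q ` E \<Longrightarrow> a x = a' x" for a a' e
  proof -
    have "h0 \<in> F" if "F \<in> subsets_of_size (H \<union> e) k - {q e}" for F
      using that face(3)[OF \<open>e \<in> E\<close>] card_q[OF \<open>e \<in> E\<close>]
      by (intro mem_if_card_eq_card_Diff_singleton[of "H \<union> e"]) (auto simp: subsets_of_size_def q_def)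
    then show ?thesis
      using that(2) unfolding \<beta>_def q_def by (intro arg_cong[where f="\<lambda>S. even (card S)"]) blast
  qed
  have "good k a (H \<union> e) = (a (q e) \<noteq> \<beta> a e)" if "e \<in> E" for a e
    unfolding q_def \<beta>_def using face(2,3)[OF that] h0 by (intro good_iff_parity_of_others) auto
  then have "map_pmf (\<lambda>a e. if e \<in> E then good k a (H \<union> e) else False) (Pi_pmf (subsets_of_size V k) False (\<lambda>_. coin))
      = map_pmf (\<lambda>a e. if e \<in> E then a (q e) \<noteq> \<beta> a e else False) (Pi_pmf (subsets_of_size V k) False (\<lambda>_. coin))"
    by (intro map_pmf_cong refl ext) simp
  also have "\<dots> = Pi_pmf E False (\<lambda>_. coin)"
    by (rule Pi_pmf_coin_reindex_xor[OF finite_subsets_of_size[OF assms(1)] inj_q range_q proper_q \<beta>_local])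
  finally show ?thesis .
qed

lemma Pi_pmf_link_coins:
  assumes "finite V" "H \<subseteq> V"
  shows "map_pmf (\<lambda>c e. if e \<in> subsets_of_size (V - H) 2 then c (H \<union> e) else d)
           (Pi_pmf (subsets_of_size V (card H + 2)) d (\<lambda>_. P))
         = Pi_pmf (subsets_of_size (V - H) 2) d (\<lambda>_. P)"
proof (rule Pi_pmf_reindex)
  have "finite H"
    using assms finite_subset by blast
  note edge = subsets_of_size_DiffD[of _ V H 2, simplified]
  show "finite (subsets_of_size V (card H + 2))"
    using assms(1) by (rule finite_subsets_of_size)
  show "inj_on ((\<union>) H) (subsets_of_size (V - H) 2)"
    using inj_on_subset[OF inj_on_Un_disjoint[of H]] edge(2) by blast
  show "(\<union>) H ` subsets_of_size (V - H) 2 \<subseteq> subsets_of_size V (card H + 2)"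
    using Un_mem_subsets_of_size[OF \<open>finite H\<close> assms(2) _ pos2] by blast
  have "{} \<notin> (\<union>) H ` subsets_of_size (V - H) 2"
    using edge(3) by force
  then show "(\<union>) H ` subsets_of_size (V - H) 2 \<noteq> UNIV"
    by (rule contrapos_nn) simp
qed

lemma link_good_faces:
  assumes "H \<subseteq> {1..n}"
  shows "link n H {F \<in> subsets_of_size {1..n} (card H + 2). good k a F \<and> c F}
       = {e \<in> subsets_of_size ({1..n} - H) 2. good k a (H \<union> e) \<and> c (H \<union> e)}"
  using Un_mem_subsets_of_size[OF finite_subset[OF assms] assms _ pos2] unfolding link_def by auto

theorem lemma5p1:
  fixes n k :: nat and p :: real and H :: "nat set"
  assumes "k \<ge> 2" and "0 \<le> p" and "p \<le> 1"
    and "H \<subseteq> {1..n}" and "card H = k - 1"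
  shows "map_pmf (link n H) (Y_faces n k p) = G_rand ({1..n} - H) (p / 2)"
proof -
  define E where "E = subsets_of_size ({1..n} - H) 2"
  define labels where "labels = Pi_pmf (subsets_of_size {1..n} k) False (\<lambda>_. coin)"
  define coins where "coins = Pi_pmf (subsets_of_size {1..n} (card H + 2)) False (\<lambda>_. bernoulli_pmf p)"
  have "k + 1 = card H + 2"
    using assms(1,5) by simp
  then have Y: "Y_faces n k p = bind_pmf labels (\<lambda>a.
      map_pmf (\<lambda>c. {F \<in> subsets_of_size {1..n} (card H + 2). good k a F \<and> c F}) coins)"
    unfolding Y_faces_def labels_def coins_def by (simp add: map_pmf_def)
  have "map_pmf (link n H) (Y_faces n k p)
      = bind_pmf labels (\<lambda>a. map_pmf (\<lambda>c. {e \<in> E. good k a (H \<union> e) \<and> c (H \<union> e)}) coins)"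
    unfolding Y E_def map_bind_pmf map_pmf_comp link_good_faces[OF assms(4)] ..
  also have "\<dots> = bind_pmf (map_pmf (\<lambda>a e. if e \<in> E then good k a (H \<union> e) else False) labels) (\<lambda>g.
          map_pmf (\<lambda>c. {e \<in> E. g e \<and> c e})
            (map_pmf (\<lambda>c e. if e \<in> E then c (H \<union> e) else False) coins))"
    by (simp add: bind_map_pmf map_pmf_comp cong: conj_cong)
  also have "\<dots> = bind_pmf (Pi_pmf E False (\<lambda>_. bernoulli_pmf (1/2))) (\<lambda>g.
          map_pmf (\<lambda>c. {e \<in> E. g e \<and> c e}) (Pi_pmf E False (\<lambda>_. bernoulli_pmf p)))"
    unfolding labels_def coins_def E_def bernoulli_pmf_half_conv_pmf_of_set
      Pi_pmf_good_link_labels[OF finite_atLeastAtMost assms(4,5,1)]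
      Pi_pmf_link_coins[OF finite_atLeastAtMost assms(4)] ..
  also have "\<dots> = G_rand ({1..n} - H) (p / 2)"
    using assms(2,3) unfolding G_rand_def E_def
    by (simp add: Pi_pmf_bernoulli_thinning finite_subsets_of_size)
  finally show ?thesis .
qed

end
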